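(* For all integers $n$ and $\alpha$ with $n<\alpha\le 2^{n-1}+1$, there exists a minimal $n$-state nondeterministic finite automaton accepting an infix-closed language whose equivalent minimal deterministic finite automaton has exactly $\alpha$ states. Moreover, if a minimal $n$-state nondeterministic finite automaton accepts an infix-closed language whose equivalent minimal deterministic finite automaton has exactly $n$ states, then $n=1$.
   Context: NFAs have a single initial state and a transition function $\delta:Q\times\Sigma\to 2^Q$ that may map to the empty set (no sink state is needed or counted); DFAs are complete, so a sink state is counted. A minimal $n$-state NFA is an NFA with $n$ states such that no NFA with fewer states accepts the same language. A language $L\subseteq\Sigma^*$ is infix-closed if $xyz\in L$ implies $y\in L$ for all $x,y,z\in\Sigma^*$. *)

theory Defs
  imports Main
begin

text \<open>States are natural numbers (any finite state set can be renamed into nat).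
  An NFA has a single initial state; transitions may map to the empty set
  (no sink state needed).\<close>

record 'a nfa =
  nstates :: "nat set"
  ninit   :: nat
  ntrans  :: "nat \<Rightarrow> 'a \<Rightarrow> nat set"
  nfinal  :: "nat set"

definition wf_nfa :: "'a set \<Rightarrow> 'a nfa \<Rightarrow> bool" where
  "wf_nfa \<Sigma> A \<longleftrightarrow> finite (nstates A) \<and> ninit A \<in> nstates A \<and> nfinal A \<subseteq> nstates A
     \<and> (\<forall>q\<in>nstates A. \<forall>a\<in>\<Sigma>. ntrans A q a \<subseteq> nstates A)"

fun nreach :: "'a nfa \<Rightarrow> nat set \<Rightarrow> 'a list \<Rightarrow> nat set" where
  "nreach A S [] = S"
| "nreach A S (a # w) = nreach A (\<Union>q\<in>S. ntrans A q a) w"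

definition nlang :: "'a set \<Rightarrow> 'a nfa \<Rightarrow> 'a list set" where
  "nlang \<Sigma> A = {w \<in> lists \<Sigma>. nreach A {ninit A} w \<inter> nfinal A \<noteq> {}}"

record 'a dfa =
  dstates :: "nat set"
  dinit   :: nat
  dtrans  :: "nat \<Rightarrow> 'a \<Rightarrow> nat"
  dfinal  :: "nat set"

definition wf_dfa :: "'a set \<Rightarrow> 'a dfa \<Rightarrow> bool" where
  "wf_dfa \<Sigma> D \<longleftrightarrow> finite (dstates D) \<and> dinit D \<in> dstates D \<and> dfinal D \<subseteq> dstates D
     \<and> (\<forall>q\<in>dstates D. \<forall>a\<in>\<Sigma>. dtrans D q a \<in> dstates D)"

definition dlang :: "'a set \<Rightarrow> 'a dfa \<Rightarrow> 'a list set" where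
  "dlang \<Sigma> D = {w \<in> lists \<Sigma>. fold (\<lambda>a q. dtrans D q a) w (dinit D) \<in> dfinal D}"

definition minimal_nfa :: "'a set \<Rightarrow> 'a nfa \<Rightarrow> nat \<Rightarrow> bool" where
  "minimal_nfa \<Sigma> A n \<longleftrightarrow> wf_nfa \<Sigma> A \<and> card (nstates A) = n
     \<and> (\<forall>B. wf_nfa \<Sigma> B \<and> nlang \<Sigma> B = nlang \<Sigma> A \<longrightarrow> n \<le> card (nstates B))"

definition min_dfa_states :: "'a set \<Rightarrow> 'a list set \<Rightarrow> nat \<Rightarrow> bool" where
  "min_dfa_states \<Sigma> L k \<longleftrightarrow>
     (\<exists>D. wf_dfa \<Sigma> D \<and> dlang \<Sigma> D = L \<and> card (dstates D) = k)
     \<and> (\<forall>D. wf_dfa \<Sigma> D \<and> dlang \<Sigma> D = L \<longrightarrow> k \<le> card (dstates D))"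

definition infix_closed :: "'a list set \<Rightarrow> bool" where
  "infix_closed L \<longleftrightarrow> (\<forall>x y z. x @ y @ z \<in> L \<longrightarrow> y \<in> L)"

end

theory Submission
  imports Defs
begin

text \<open>For the first part let \<open>m = n - 1\<close> and \<open>k = \<alpha> - 2\<close>, and choose \<open>k\<close> distinct nonempty subsets
  \<open>H\<^sub>j\<close> of \<open>{1..m}\<close>, among them all singletons. The NFA has states \<open>0..m\<close>, all final; a letter
  \<open>b\<^sub>i\<close> leads from \<open>0\<close> and from \<open>i\<close> to \<open>0\<close>, a letter \<open>c\<^sub>j\<close> leads from \<open>0\<close> to \<open>H\<^sub>j\<close>, and one more letter
  is read by no state. Every state reads only words that \<open>0\<close> reads, so the language is
  infix-closed. The reachable subsets \<open>{0}\<close>, \<open>{}\<close> and \<open>H\<^sub>j\<close> accept pairwise different languages,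
  so the minimal DFA has \<open>k + 2 = \<alpha>\<close> states. Writing \<open>c\<^sub>i\<close> also for the letter with target
  \<open>{i}\<close>, the pairs \<open>([], c\<^sub>1)\<close> and \<open>(c\<^sub>i, b\<^sub>i)\<close> form a fooling set of size \<open>m + 1 = n\<close>.

  For the second part, an infix-closed language other than \<open>{}\<close> and \<open>\<Sigma>\<^sup>*\<close> contains the empty word
  and misses some word, which leads its DFA into a dead state. Deleting that state gives an
  NFA with one state fewer, so the sizes can only agree for the two trivial languages, which
  have one-state automata.\<close>

section \<open>Runs of NFAs and fooling sets\<close>

lemma nreach_append: "nreach A S (u @ v) = nreach A (nreach A S u) v"
  by (induction u arbitrary: S) auto

lemma nreach_empty [simp]: "nreach A {} w = {}"
  by (induction w) auto

lemma nreach_UN: "nreach A S w = (\<Union>q\<in>S. nreach A {q} w)"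
proof (induction w arbitrary: S)
  case (Cons a w)
  have "nreach A {q} (a # w) = (\<Union>p\<in>ntrans A q a. nreach A {p} w)" for q
    using Cons.IH[of "ntrans A q a"] by simp
  then show ?case
    using Cons.IH[of "\<Union>q\<in>S. ntrans A q a"] by (simp add: UN_UN_flatten)
qed simp

lemma nreach_mono: "S \<subseteq> T \<Longrightarrow> nreach A S w \<subseteq> nreach A T w"
  using nreach_UN[of A S w] nreach_UN[of A T w] by (simp add: SUP_subset_mono)

lemma nreach_subset_nstates:
  assumes "wf_nfa \<Sigma> A" "S \<subseteq> nstates A" "w \<in> lists \<Sigma>"
  shows "nreach A S w \<subseteq> nstates A"
  using assms(2,3)
proof (induction w arbitrary: S)
  case (Cons a w)
  have "ntrans A q a \<subseteq> nstates A" if "q \<in> S" for q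
  proof -
    have "q \<in> nstates A" "a \<in> \<Sigma>" using Cons.prems that by auto
    then show ?thesis using assms(1) unfolding wf_nfa_def by simp
  qed
  with Cons show ?case by (simp add: UN_least)
qed simp

lemma wf_nfa_card_ge_1: "wf_nfa \<Sigma> A \<Longrightarrow> 1 \<le> card (nstates A)"
  unfolding wf_nfa_def by (auto simp: Suc_le_eq card_gt_0_iff)

text \<open>An accepting run of \<open>x i @ y i\<close> passes through some state
  after \<open>x i\<close>; if two indices passed through the same state, both crossed words would be accepted.\<close>

lemma fooling_set_card_le:
  assumes wf: "wf_nfa \<Sigma> B" and fin: "finite I"
    and acc: "\<And>i. i \<in> I \<Longrightarrow> x i @ y i \<in> nlang \<Sigma> B"
    and fool: "\<And>i j. i \<in> I \<Longrightarrow> j \<in> I \<Longrightarrow> i \<noteq> j \<Longrightarrow>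
                 x i @ y j \<notin> nlang \<Sigma> B \<or> x j @ y i \<notin> nlang \<Sigma> B"
  shows "card I \<le> card (nstates B)"
proof -
  let ?mid = "\<lambda>i p. p \<in> nreach B {ninit B} (x i) \<and> nreach B {p} (y i) \<inter> nfinal B \<noteq> {}"
  have "\<exists>p. ?mid i p" if "i \<in> I" for i
  proof -
    have "nreach B {ninit B} (x i @ y i) \<inter> nfinal B \<noteq> {}"
      using acc[OF that] unfolding nlang_def by auto
    then show ?thesis unfolding nreach_append by (subst (asm) nreach_UN) auto
  qed
  then obtain p where p: "\<And>i. i \<in> I \<Longrightarrow> ?mid i (p i)" by metis
  have cross: "x i @ y j \<in> nlang \<Sigma> B" if "i \<in> I" "j \<in> I" "p i = p j" for i j
  proof -
    have "nreach B {p j} (y j) \<subseteq> nreach B {ninit B} (x i @ y j)"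
      unfolding nreach_append using p[OF that(1)] that(3) by (intro nreach_mono) auto
    moreover have "x i \<in> lists \<Sigma>" "y j \<in> lists \<Sigma>"
      using acc that(1,2) unfolding nlang_def by auto
    ultimately show ?thesis using p[OF that(2)] unfolding nlang_def by auto
  qed
  have "inj_on p I"
    by (rule inj_onI) (metis cross fool)
  moreover have "p ` I \<subseteq> nstates B"
  proof clarify
    fix i assume "i \<in> I"
    moreover have "x i \<in> lists \<Sigma>" using acc[OF \<open>i \<in> I\<close>] unfolding nlang_def by auto
    moreover have "{ninit B} \<subseteq> nstates B" using wf unfolding wf_nfa_def by auto
    ultimately show "p i \<in> nstates B" using nreach_subset_nstates[OF wf] p by blast
  qed
  moreover have "finite (nstates B)" using wf unfolding wf_nfa_def by auto
  ultimately show ?thesis by (metis card_inj_on_le)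
qed

section \<open>Minimal DFAs and left quotients\<close>

definition left_quotient :: "'a set \<Rightarrow> 'a list set \<Rightarrow> 'a list \<Rightarrow> 'a list set" where
  "left_quotient \<Sigma> L u = {z \<in> lists \<Sigma>. u @ z \<in> L}"

abbreviation drun :: "'a dfa \<Rightarrow> 'a list \<Rightarrow> nat \<Rightarrow> nat" where
  "drun D w q \<equiv> fold (\<lambda>a q. dtrans D q a) w q"

lemma drun_in_dstates:
  assumes "wf_dfa \<Sigma> D" "q \<in> dstates D" "w \<in> lists \<Sigma>"
  shows "drun D w q \<in> dstates D"
  using assms(2,3) by (induction w arbitrary: q) (use assms(1) in \<open>auto simp: wf_dfa_def\<close>)

lemma card_left_quotients_le_dfa:
  assumes D: "wf_dfa \<Sigma> D" "dlang \<Sigma> D = L"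
  shows "finite (left_quotient \<Sigma> L ` lists \<Sigma>)"
    and "card (left_quotient \<Sigma> L ` lists \<Sigma>) \<le> card (dstates D)"
proof -
  define accepted_from where
    "accepted_from q = {z \<in> lists \<Sigma>. drun D z q \<in> dfinal D}" for q
  have "left_quotient \<Sigma> L u = accepted_from (drun D u (dinit D))" if "u \<in> lists \<Sigma>" for u
    using that D(2) unfolding left_quotient_def accepted_from_def dlang_def by auto
  moreover have "drun D u (dinit D) \<in> dstates D" if "u \<in> lists \<Sigma>" for u
    using drun_in_dstates[OF D(1) _ that] D(1) unfolding wf_dfa_def by auto
  ultimately have sub: "left_quotient \<Sigma> L ` lists \<Sigma> \<subseteq> accepted_from ` dstates D" by auto
  have "finite (dstates D)" using D(1) unfolding wf_dfa_def by auto
  then show "finite (left_quotient \<Sigma> L ` lists \<Sigma>)"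
    and "card (left_quotient \<Sigma> L ` lists \<Sigma>) \<le> card (dstates D)"
    using sub by (meson finite_imageI finite_subset, meson card_image_le card_mono finite_imageI order_trans)
qed

lemma left_quotient_snoc:
  "a \<in> \<Sigma> \<Longrightarrow> {z. a # z \<in> left_quotient \<Sigma> L u} = left_quotient \<Sigma> L (u @ [a])"
  unfolding left_quotient_def by auto

text \<open>States are natural numbers, so the left quotients are numbered by a bijection \<open>e\<close>.\<close>

lemma quotient_dfa_exists:
  assumes L: "L \<subseteq> lists \<Sigma>" and fin: "finite (left_quotient \<Sigma> L ` lists \<Sigma>)"
  shows "\<exists>D. wf_dfa \<Sigma> D \<and> dlang \<Sigma> D = L \<and> card (dstates D) = card (left_quotient \<Sigma> L ` lists \<Sigma>)"
proof -
  let ?Q = "left_quotient \<Sigma> L ` lists \<Sigma>"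
  obtain e where e: "bij_betw e {0..<card ?Q} ?Q" using ex_bij_betw_nat_finite[OF fin] by blast
  define num where "num = inv_into {0..<card ?Q} e"
  have num: "num X \<in> {0..<card ?Q}" "e (num X) = X" if "X \<in> ?Q" for X
    using that bij_betwE[OF bij_betw_inv_into[OF e]] bij_betw_inv_into_right[OF e]
    unfolding num_def by auto
  have num_e: "num (e q) = q" if "q \<in> {0..<card ?Q}" for q
    using bij_betw_inv_into_left[OF e that] unfolding num_def .
  define D where "D = \<lparr>dstates = {0..<card ?Q}, dinit = num (left_quotient \<Sigma> L []),
     dtrans = (\<lambda>q a. num {z. a # z \<in> e q}), dfinal = {q \<in> {0..<card ?Q}. [] \<in> e q}\<rparr>"
  have step: "dtrans D (num (left_quotient \<Sigma> L u)) a = num (left_quotient \<Sigma> L (u @ [a]))"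
    if "u \<in> lists \<Sigma>" "a \<in> \<Sigma>" for u a
    using that num(2) left_quotient_snoc[OF that(2)] by (simp add: D_def)
  have run: "drun D v (num (left_quotient \<Sigma> L u)) = num (left_quotient \<Sigma> L (u @ v))"
    if "v \<in> lists \<Sigma>" "u \<in> lists \<Sigma>" for u v
    using that by (induction v arbitrary: u) (simp_all add: step)
  have "wf_dfa \<Sigma> D"
    unfolding wf_dfa_def
  proof (intro conjI ballI)
    fix q a assume q: "q \<in> dstates D" and a: "a \<in> \<Sigma>"
    then have "e q \<in> ?Q" using bij_betwE[OF e] by (simp add: D_def)
    then obtain u where u: "u \<in> lists \<Sigma>" "e q = left_quotient \<Sigma> L u" by blast
    moreover have "q = num (e q)" using q num_e by (simp add: D_def)
    ultimately have "dtrans D q a = num (left_quotient \<Sigma> L (u @ [a]))"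
      using step[OF u(1) a] by simp
    then show "dtrans D q a \<in> dstates D" using u a num(1) by (simp add: D_def)
  qed (use num(1)[of "left_quotient \<Sigma> L []"] in \<open>auto simp: D_def\<close>)
  moreover have "dlang \<Sigma> D = L"
  proof -
    have "drun D w (dinit D) \<in> dfinal D \<longleftrightarrow> w \<in> L" if "w \<in> lists \<Sigma>" for w
      using run[OF that, of "[]"] num[of "left_quotient \<Sigma> L w"] that
      by (simp add: D_def left_quotient_def)
    then show ?thesis using L unfolding dlang_def by auto
  qed
  moreover have "card (dstates D) = card ?Q" by (simp add: D_def)
  ultimately show ?thesis by blast
qed

lemma min_dfa_states_card_left_quotients:
  assumes "L \<subseteq> lists \<Sigma>" "finite (left_quotient \<Sigma> L ` lists \<Sigma>)"
  shows "min_dfa_states \<Sigma> L (card (left_quotient \<Sigma> L ` lists \<Sigma>))"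
  using quotient_dfa_exists[OF assms] card_left_quotients_le_dfa(2)
  unfolding min_dfa_states_def by blast

lemma single_state_nfa_exists:
  assumes "L = {} \<or> L = lists \<Sigma>"
  shows "\<exists>B. wf_nfa \<Sigma> B \<and> nlang \<Sigma> B = L \<and> card (nstates B) = 1"
proof -
  define F :: "nat set" where "F = (if L = {} then {} else {0})"
  define B :: "'a nfa" where "B = \<lparr>nstates = {0}, ninit = 0, ntrans = (\<lambda>q a. F), nfinal = F\<rparr>"
  have "nreach B {0} w = (if w = [] then {0} else F)" for w
  proof (induction w rule: rev_induct)
    case (snoc a w)
    have "nreach B {0} (w @ [a]) = (\<Union>q\<in>nreach B {0} w. F)"
      by (simp add: nreach_append B_def)
    then show ?case using snoc by auto
  qed simp
  then have "nlang \<Sigma> B = L"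
    using assms unfolding nlang_def by (auto simp: B_def F_def)
  moreover have "wf_nfa \<Sigma> B" by (simp add: wf_nfa_def B_def F_def)
  ultimately show ?thesis by (auto simp: B_def)
qed

lemma nfa_delete_dead_state:
  assumes D: "wf_dfa \<Sigma> D" and s: "s \<in> dstates D" "s \<noteq> dinit D"
    and dead: "\<And>z. z \<in> lists \<Sigma> \<Longrightarrow> drun D z s \<notin> dfinal D"
  shows "\<exists>B. wf_nfa \<Sigma> B \<and> nlang \<Sigma> B = dlang \<Sigma> D \<and> card (nstates B) = card (dstates D) - 1"
proof -
  define B where "B = \<lparr>nstates = dstates D - {s}, ninit = dinit D,
      ntrans = (\<lambda>q a. {dtrans D q a} - {s}), nfinal = dfinal D\<rparr>"
  have "s \<notin> dfinal D" using dead[of "[]"] by simp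
  then have wf: "wf_nfa \<Sigma> B" using D s unfolding B_def wf_nfa_def wf_dfa_def by auto
  have run: "nreach B {q} z \<inter> dfinal D \<noteq> {} \<longleftrightarrow> drun D z q \<in> dfinal D"
    if "q \<noteq> s" "z \<in> lists \<Sigma>" for q z
    using that
  proof (induction z arbitrary: q)
    case (Cons a z)
    then show ?case
      using dead[of z] Cons.IH[of "dtrans D q a"] by (cases "dtrans D q a = s") (simp_all add: B_def)
  qed simp
  then have "nreach B {ninit B} z \<inter> nfinal B \<noteq> {} \<longleftrightarrow> drun D z (dinit D) \<in> dfinal D"
    if "z \<in> lists \<Sigma>" for z
    using s(2) that by (simp add: B_def)
  then have "nlang \<Sigma> B = dlang \<Sigma> D" unfolding nlang_def dlang_def by blast
  moreover have "card (nstates B) = card (dstates D) - 1"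
    using D s(1) unfolding B_def wf_dfa_def by simp
  ultimately show ?thesis using wf by blast
qed

lemma infix_closed_dfa_dead_state:
  assumes "infix_closed (dlang \<Sigma> D)" "w \<in> lists \<Sigma>" "w \<notin> dlang \<Sigma> D" "z \<in> lists \<Sigma>"
  shows "drun D z (drun D w (dinit D)) \<notin> dfinal D"
proof
  assume "drun D z (drun D w (dinit D)) \<in> dfinal D"
  then have "[] @ w @ z \<in> dlang \<Sigma> D" using assms(2,4) unfolding dlang_def by simp
  then show False using assms(1,3) unfolding infix_closed_def by (metis append_Nil2)
qed

lemma infix_closed_min_nfa_eq_min_dfa_imp_1:
  assumes m: "minimal_nfa \<Sigma> A n" and ic: "infix_closed (nlang \<Sigma> A)"
    and d: "min_dfa_states \<Sigma> (nlang \<Sigma> A) n"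
  shows "n = 1"
proof -
  let ?L = "nlang \<Sigma> A"
  have min: "n \<le> card (nstates B)" if "wf_nfa \<Sigma> B" "nlang \<Sigma> B = ?L" for B
    using m that unfolding minimal_nfa_def by auto
  have "1 \<le> n" using m wf_nfa_card_ge_1 unfolding minimal_nfa_def by auto
  moreover have "n \<le> 1"
  proof (cases "?L = {} \<or> ?L = lists \<Sigma>")
    case True
    then show ?thesis using single_state_nfa_exists min by metis
  next
    case False
    then obtain w v where w: "w \<in> lists \<Sigma>" "w \<notin> ?L" and "v \<in> ?L"
      unfolding nlang_def by blast
    then have "[] \<in> ?L" using ic unfolding infix_closed_def by (metis append_Nil)
    obtain D where D: "wf_dfa \<Sigma> D" "dlang \<Sigma> D = ?L" "card (dstates D) = n"
      using d unfolding min_dfa_states_def by auto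
    let ?s = "drun D w (dinit D)"
    have dead: "drun D z ?s \<notin> dfinal D" if "z \<in> lists \<Sigma>" for z
      using infix_closed_dfa_dead_state[of \<Sigma> D] ic w that D(2) by simp
    have "?s \<in> dstates D" using drun_in_dstates[OF D(1) _ w(1)] D(1) unfolding wf_dfa_def by auto
    moreover have "dinit D \<in> dfinal D"
      using \<open>[] \<in> ?L\<close> unfolding D(2)[symmetric] dlang_def by simp
    then have "?s \<noteq> dinit D" using dead[of "[]"] by auto
    ultimately show ?thesis
      using nfa_delete_dead_state[OF D(1) _ _ dead] D min by fastforce
  qed
  ultimately show ?thesis by simp
qed

section \<open>The witness automata\<close>

definition back_letter :: "nat \<Rightarrow> nat" where
  "back_letter i = 2 * i + 1"

definition jump_letter :: "nat \<Rightarrow> nat" where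
  "jump_letter j = 2 * j + 2"

text \<open>Letter \<open>0\<close> is read by no state; the letters \<open>b\<^sub>i\<close> and \<open>c\<^sub>j\<close> are encoded as the odd numbers
  \<open>back_letter i\<close> and the even numbers \<open>jump_letter j\<close>.\<close>

definition witness_trans :: "nat \<Rightarrow> (nat \<Rightarrow> nat set) \<Rightarrow> nat \<Rightarrow> nat \<Rightarrow> nat set" where
  "witness_trans k h q x =
     (if x = 0 then {}
      else if odd x then (if q = 0 \<or> q = x div 2 then {0} else {})
      else if q = 0 \<and> x div 2 - 1 < k then h (x div 2 - 1) else {})"

lemma witness_trans_simps [simp]:
  "witness_trans k h q 0 = {}"
  "witness_trans k h q (back_letter i) = (if q = 0 \<or> q = i then {0} else {})"
  "witness_trans k h q (jump_letter j) = (if q = 0 \<and> j < k then h j else {})"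
  by (simp_all add: witness_trans_def back_letter_def jump_letter_def)

lemma letters_distinct [simp]:
  "back_letter i \<noteq> 0" "jump_letter j \<noteq> 0"
  "back_letter i \<noteq> jump_letter j" "jump_letter j \<noteq> back_letter i"
  "back_letter i = back_letter i' \<longleftrightarrow> i = i'" "jump_letter j = jump_letter j' \<longleftrightarrow> j = j'"
  unfolding back_letter_def jump_letter_def by presburger+

lemma letter_cases:
  obtains "x = 0" | i where "x = back_letter i" | j where "x = jump_letter j"
proof (cases "x = 0")
  case False
  then have "x = 2 * (x div 2) + 1 \<or> x = 2 * (x div 2 - 1) + 2" by presburger
  then show thesis using that(2,3) unfolding back_letter_def jump_letter_def by blast
qed (rule that(1))

definition witness_nfa :: "nat \<Rightarrow> nat \<Rightarrow> (nat \<Rightarrow> nat set) \<Rightarrow> nat nfa" where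
  "witness_nfa m k h = \<lparr>nstates = {0..m}, ninit = 0, ntrans = witness_trans k h, nfinal = {0..m}\<rparr>"

definition witness_alphabet :: "nat \<Rightarrow> nat \<Rightarrow> nat set" where
  "witness_alphabet m k = insert 0 (back_letter ` {1..m} \<union> jump_letter ` {..<k})"

locale infix_witness =
  fixes m k :: nat and h :: "nat \<Rightarrow> nat set"
  assumes h_subset: "\<And>j. j < k \<Longrightarrow> h j \<subseteq> {1..m}"
    and h_nonempty: "\<And>j. j < k \<Longrightarrow> h j \<noteq> {}"
    and h_inj: "inj_on h {..<k}"
    and h_singletons: "\<And>i. i \<in> {1..m} \<Longrightarrow> \<exists>j<k. h j = {i}"
begin

abbreviation "A \<equiv> witness_nfa m k h"
abbreviation "Sig \<equiv> witness_alphabet m k"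

lemma witness_nfa_simps [simp]:
  "ntrans A = witness_trans k h" "ninit A = 0" "nstates A = {0..m}" "nfinal A = {0..m}"
  by (simp_all add: witness_nfa_def)

lemma letters_in_alphabet [simp]:
  "0 \<in> Sig"
  "back_letter i \<in> Sig \<longleftrightarrow> i \<in> {1..m}"
  "jump_letter j \<in> Sig \<longleftrightarrow> j < k"
  unfolding witness_alphabet_def by auto

lemma finite_alphabet: "finite Sig"
  by (simp add: witness_alphabet_def)

lemma witness_trans_subset: "witness_trans k h q x \<subseteq> {0..m}"
  by (cases x rule: letter_cases) (auto dest: h_subset[THEN subsetD])

lemma wf_witness: "wf_nfa Sig A"
  using witness_trans_subset by (simp add: wf_nfa_def)

lemma nlang_witness: "nlang Sig A = {w \<in> lists Sig. nreach A {0} w \<noteq> {}}"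
  using nreach_subset_nstates[OF wf_witness, of "{0}"] unfolding nlang_def by auto

lemma readable_from_hub: "nreach A {q} w \<noteq> {} \<Longrightarrow> nreach A {0} w \<noteq> {}"
proof (cases w)
  case (Cons x w')
  assume "nreach A {q} w \<noteq> {}"
  moreover have "witness_trans k h q x = {} \<or> witness_trans k h q x = witness_trans k h 0 x"
    by (cases x rule: letter_cases) auto
  ultimately show ?thesis using Cons by auto
qed simp

lemma infix_closed_witness: "infix_closed (nlang Sig A)"
  unfolding infix_closed_def nlang_witness
proof (intro allI impI CollectI conjI)
  fix x y z :: "nat list"
  assume xyz: "x @ y @ z \<in> {w \<in> lists Sig. nreach A {0} w \<noteq> {}}"
  then show "y \<in> lists Sig" by simp
  from xyz have "nreach A (nreach A (nreach A {0} x) y) z \<noteq> {}"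
    by (simp add: nreach_append)
  then have "nreach A (nreach A {0} x) y \<noteq> {}" by auto
  then obtain q where "nreach A {q} y \<noteq> {}"
    by (subst (asm) nreach_UN) auto
  then show "nreach A {0} y \<noteq> {}" by (rule readable_from_hub)
qed

definition reach_sets :: "nat set set" where
  "reach_sets = insert {0} (insert {} (h ` {..<k}))"

lemma reach_sets_cases: "X \<in> reach_sets \<Longrightarrow> X = {0} \<or> X \<subseteq> {1..m}"
  using h_subset unfolding reach_sets_def by auto

lemma step_in_reach_sets:
  assumes "X \<in> reach_sets"
  shows "(\<Union>q\<in>X. witness_trans k h q x) \<in> reach_sets"
  using reach_sets_cases[OF assms]
proof
  assume "X = {0}"
  then show ?thesis by (cases x rule: letter_cases) (auto simp: reach_sets_def)
next
  assume "X \<subseteq> {1..m}"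
  then have "(\<Union>q\<in>X. witness_trans k h q x) \<subseteq> {0}"
    by (cases x rule: letter_cases) auto
  then consider "(\<Union>q\<in>X. witness_trans k h q x) = {}" | "(\<Union>q\<in>X. witness_trans k h q x) = {0}"
    by (auto simp only: subset_singleton_iff)
  then show ?thesis by cases (simp_all add: reach_sets_def)
qed

lemma reachable_sets_witness: "(\<lambda>w. nreach A {0} w) ` lists Sig = reach_sets"
proof
  show "(\<lambda>w. nreach A {0} w) ` lists Sig \<subseteq> reach_sets"
  proof clarify
    fix w show "nreach A {0} w \<in> reach_sets"
    proof (induction w rule: rev_induct)
      case (snoc x w)
      then show ?case by (simp add: nreach_append step_in_reach_sets)
    qed (simp add: reach_sets_def)
  qed
  show "reach_sets \<subseteq> (\<lambda>w. nreach A {0} w) ` lists Sig"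
  proof
    fix X assume "X \<in> reach_sets"
    then consider "X = {0}" | "X = {}" | j where "j < k" "X = h j"
      unfolding reach_sets_def by auto
    then show "X \<in> (\<lambda>w. nreach A {0} w) ` lists Sig"
    proof cases
      case 1 then show ?thesis by (intro image_eqI[of _ _ "[]"]) auto
    next
      case 2 then show ?thesis by (intro image_eqI[of _ _ "[0]"]) auto
    next
      case 3 then show ?thesis by (intro image_eqI[of _ _ "[jump_letter j]"]) auto
    qed
  qed
qed

lemma card_reach_sets: "card reach_sets = k + 2"
proof -
  have "{0} \<notin> h ` {..<k}"
    using h_subset by (metis atLeastAtMost_iff imageE insert_subset lessThan_iff not_one_le_zero)
  moreover have "{} \<notin> h ` {..<k}"
    using h_nonempty by blast
  ultimately show ?thesis
    using card_image[OF h_inj] unfolding reach_sets_def by simp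
qed

definition accepted_from :: "nat set \<Rightarrow> nat list set" where
  "accepted_from X = {z \<in> lists Sig. nreach A X z \<noteq> {}}"

lemma left_quotient_witness:
  "u \<in> lists Sig \<Longrightarrow> left_quotient Sig (nlang Sig A) u = accepted_from (nreach A {0} u)"
  unfolding left_quotient_def accepted_from_def nlang_witness by (simp add: nreach_append)

lemma inj_on_accepted_from: "inj_on accepted_from reach_sets"
proof (rule inj_onI)
  have empty_word: "[] \<in> accepted_from X \<longleftrightarrow> X \<noteq> {}" for X
    unfolding accepted_from_def by auto
  have back_word: "[back_letter i] \<in> accepted_from X \<longleftrightarrow> i \<in> X"
    if "X \<subseteq> {1..m}" "i \<in> {1..m}" for X i
    using that unfolding accepted_from_def by auto
  have jump_word: "[jump_letter j] \<in> accepted_from X \<longleftrightarrow> X = {0}"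
    if "X = {0} \<or> X \<subseteq> {1..m}" "j < k" for X j
    using that h_nonempty[OF that(2)] unfolding accepted_from_def by auto
  fix X Y assume X: "X \<in> reach_sets" and Y: "Y \<in> reach_sets" and eq: "accepted_from X = accepted_from Y"
  show "X = Y"
  proof (cases "X = {0} \<or> Y = {0}")
    case True
    moreover have "k > 0" if "Z \<in> reach_sets" "Z \<noteq> {0}" "Z \<noteq> {}" for Z
      using that unfolding reach_sets_def by auto
    ultimately show ?thesis
      using eq empty_word jump_word[of _ 0] reach_sets_cases X Y by (metis insert_not_empty)
  next
    case False
    then have "X \<subseteq> {1..m}" "Y \<subseteq> {1..m}" using reach_sets_cases X Y by auto
    then show ?thesis using eq back_word by blast
  qed
qed

lemma min_dfa_witness: "min_dfa_states Sig (nlang Sig A) (k + 2)"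
proof -
  have quotients: "left_quotient Sig (nlang Sig A) ` lists Sig = accepted_from ` reach_sets"
    unfolding reachable_sets_witness[symmetric] image_image using left_quotient_witness by simp
  have "nlang Sig A \<subseteq> lists Sig" unfolding nlang_def by auto
  moreover have "finite reach_sets" by (simp add: reach_sets_def)
  ultimately have "min_dfa_states Sig (nlang Sig A) (card (accepted_from ` reach_sets))"
    using min_dfa_states_card_left_quotients[of "nlang Sig A" Sig] unfolding quotients by simp
  then show ?thesis using card_image[OF inj_on_accepted_from] card_reach_sets by simp
qed

lemma fooling_set_witness:
  assumes "1 \<le> m"
  obtains x y :: "nat \<Rightarrow> nat list"
  where "\<And>i. i \<in> {0..m} \<Longrightarrow> x i @ y i \<in> nlang Sig A"
    and "\<And>i j. i \<in> {0..m} \<Longrightarrow> j \<in> {0..m} \<Longrightarrow> i \<noteq> j \<Longrightarrow>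
           x i @ y j \<notin> nlang Sig A \<or> x j @ y i \<notin> nlang Sig A"
proof -
  obtain c where c: "\<And>i. i \<in> {1..m} \<Longrightarrow> c i < k \<and> h (c i) = {i}"
    using h_singletons by metis
  define x where "x i = (if i = 0 then [] else [jump_letter (c i)])" for i
  define y where "y i = (if i = 0 then [jump_letter (c 1)] else [back_letter i])" for i
  have c1: "c 1 < k" "h (c 1) = {1}" using c[of 1] assms by auto
  have "x i @ y i \<in> nlang Sig A" if "i \<in> {0..m}" for i
    using that c[of i] c1 unfolding nlang_witness x_def y_def by auto
  moreover have "x i @ y j \<notin> nlang Sig A" if "i \<in> {1..m}" "j \<in> {0..m}" "i \<noteq> j" for i j
    using that c[of i] unfolding nlang_witness x_def y_def by auto
  then have "x i @ y j \<notin> nlang Sig A \<or> x j @ y i \<notin> nlang Sig A"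
    if "i \<in> {0..m}" "j \<in> {0..m}" "i \<noteq> j" for i j
    using that by (cases "i = 0") auto
  ultimately show thesis using that by blast
qed

lemma minimal_witness: "minimal_nfa Sig A (m + 1)"
  unfolding minimal_nfa_def
proof (intro conjI allI impI)
  fix B assume B: "wf_nfa Sig B \<and> nlang Sig B = nlang Sig A"
  show "m + 1 \<le> card (nstates B)"
  proof (cases "m = 0")
    case True
    then show ?thesis using wf_nfa_card_ge_1[of Sig B] B by simp
  next
    case False
    then obtain x y where "\<And>i. i \<in> {0..m} \<Longrightarrow> x i @ y i \<in> nlang Sig B"
      and "\<And>i j. i \<in> {0..m} \<Longrightarrow> j \<in> {0..m} \<Longrightarrow> i \<noteq> j \<Longrightarrow>
             x i @ y j \<notin> nlang Sig B \<or> x j @ y i \<notin> nlang Sig B"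
      using fooling_set_witness B by (metis less_one not_le)
    then have "card {0..m} \<le> card (nstates B)"
      using fooling_set_card_le[of Sig B "{0..m}" x y] B by blast
    then show ?thesis by simp
  qed
qed (simp_all add: wf_witness)

end

lemma infix_witness_exists:
  assumes "m \<le> k" "k < 2 ^ m"
  shows "\<exists>h. infix_witness m k h"
proof -
  let ?P = "Pow {1..m} - {{}} :: nat set set"
  let ?S = "(\<lambda>i. {i}) ` {1..m} :: nat set set"
  have "card ?P = 2 ^ m - 1"
    by (simp add: card_Diff_singleton card_Pow)
  moreover have "card ?S = m" by (simp add: card_image)
  moreover have "?S \<subseteq> ?P" by auto
  ultimately have "card (?P - ?S) = 2 ^ m - 1 - m"
    by (simp add: card_Diff_subset finite_subset)
  then have "k - m \<le> card (?P - ?S)" using assms by simp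
  then obtain X where X: "X \<subseteq> ?P - ?S" "card X = k - m"
    by (rule obtain_subset_with_card_n)
  have fin: "finite X" using X(1) by (rule finite_subset) simp
  have card_F: "card (?S \<union> X) = k"
    using card_Un_disjoint[of ?S X] X fin \<open>card ?S = m\<close> assms(1) by auto
  obtain h where h: "bij_betw h {..<k} (?S \<union> X)"
    using ex_bij_betw_nat_finite[of "?S \<union> X"] fin card_F by (auto simp: atLeast0LessThan)
  have "infix_witness m k h"
  proof
    fix j assume "j < k"
    then have "h j \<in> ?P" using bij_betwE[OF h] X(1) \<open>?S \<subseteq> ?P\<close> by blast
    then show "h j \<subseteq> {1..m}" "h j \<noteq> {}" by auto
  next
    show "inj_on h {..<k}" using h by (rule bij_betw_imp_inj_on)
  next
    fix i :: nat assume "i \<in> {1..m}"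
    then have "{i} \<in> h ` {..<k}" using bij_betw_imp_surj_on[OF h] by auto
    then show "\<exists>j<k. h j = {i}" by (metis imageE lessThan_iff)
  qed
  then show ?thesis by blast
qed

theorem mainTheorem7:
  shows "(\<forall>n \<alpha> :: nat. 1 \<le> n \<and> n < \<alpha> \<and> \<alpha> \<le> 2 ^ (n - 1) + 1 \<longrightarrow>
           (\<exists>(\<Sigma> :: nat set) A. finite \<Sigma> \<and> minimal_nfa \<Sigma> A n
              \<and> infix_closed (nlang \<Sigma> A) \<and> min_dfa_states \<Sigma> (nlang \<Sigma> A) \<alpha>))
       \<and> (\<forall>(\<Sigma> :: 'a set) (A :: 'a nfa) n. finite \<Sigma> \<and> minimal_nfa \<Sigma> A n
              \<and> infix_closed (nlang \<Sigma> A) \<and> min_dfa_states \<Sigma> (nlang \<Sigma> A) n \<longrightarrow> n = 1)"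
proof (intro conjI allI impI)
  fix n \<alpha> :: nat
  assume bounds: "1 \<le> n \<and> n < \<alpha> \<and> \<alpha> \<le> 2 ^ (n - 1) + 1"
  then have "n - 1 \<le> \<alpha> - 2" "\<alpha> - 2 < 2 ^ (n - 1)" by auto
  then obtain h where "infix_witness (n - 1) (\<alpha> - 2) h" using infix_witness_exists by blast
  then interpret W: infix_witness "n - 1" "\<alpha> - 2" h .
  have "n - 1 + 1 = n" "\<alpha> - 2 + 2 = \<alpha>" using bounds by auto
  then show "\<exists>(\<Sigma> :: nat set) A. finite \<Sigma> \<and> minimal_nfa \<Sigma> A n
              \<and> infix_closed (nlang \<Sigma> A) \<and> min_dfa_states \<Sigma> (nlang \<Sigma> A) \<alpha>"
    using W.finite_alphabet W.minimal_witness W.infix_closed_witness W.min_dfa_witness by metis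
qed (use infix_closed_min_nfa_eq_min_dfa_imp_1 in blast)

end
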